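(* Consider the linear vehicle platoon model $\dot{x}(t)=A_{\mathrm{c}}x(t)+B_{\mathrm{c}}u(t)$ with communication attempt time instants $\mathcal{S}=\{s_0,s_1,s_2,\ldots\}$ and the time-discretized braking model (so that the reference desired acceleration $u_0(t)$ is constant on each interval $[s_k,s_{k+1})$). If $\mathcal{S}\subseteq\mathcal{T}$ with $\mathcal{T}\triangleq\{t_0,t_1,t_2,\ldots\}$ and there exists $\alpha>0$ such that \[ t_{k+1}-t_{k}\leq\ln\left(\frac{\mu(\tilde{A})\alpha}{\varphi\|\tilde{x}(t_{k})\|}+1\right)/\mu(\tilde{A}) \] for every $k\in\mathbb{N}_0$, where \[ \varphi\triangleq\max_{i\in\{2,\ldots,n\}}\|q_i^{\top}(A_{\mathrm{c}}b_1^{\top}+B_{\mathrm{c}}b_2^{\top})\|, \] then \[ |d_i(t)-d_i(t_k)|\leq\alpha,\quad t\in[t_k,t_{k+1}), \] for every $k\in\mathbb{N}_0$ and every $i\in\{2,\ldots,n\}$.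
   Context: The platoon consists of a virtual reference vehicle and $n$ actual vehicles; its dynamics are the linear system $\dot{x}(t)=A_{\mathrm{c}}x(t)+B_{\mathrm{c}}u(t)$ with state $x(t)\in\mathbb{R}^{3+6n}$ (stacking $[p_0,v_0,a_0]$ for the reference vehicle and $[e_i,\dot e_i,p_i,v_i,a_i,u_i]$ for each vehicle $i=1,\dots,n$, with $p$ positions) and input $u(t)=[u_0(t),\hat u_0(t),\hat u_1(t),\ldots,\hat u_{n-1}(t)]^\top\in\mathbb{R}^{1+n}$, where $A_{\mathrm{c}}\in\mathbb{R}^{(3+6n)\times(3+6n)}$ and $B_{\mathrm{c}}\in\mathbb{R}^{(3+6n)\times(1+n)}$ are the platoon system matrices. Communication attempts occur at $s_j=jT$, $T>0$; the received desired accelerations $\hat u_i(t)$ ($i\ge 1$) are held constant on $[s_j,s_{j+1})$ (updated at $s_j$ on success, kept on packet loss), $\hat u_0=u_0$, and the time-discretized braking model sets $u_0(t)=u_{0,k}$ constant on $[s_k,s_{k+1})$. Hence, when $\mathcal{S}\subseteq\mathcal{T}$, $u(t)=u(t_k)$ on $[t_k,t_{k+1})$. Inter-vehicle distances are $d_i(t)=p_{i-1}(t)-p_i(t)-L_i=q_i^\top x(t)-L_i$ for $i\in\{2,\ldots,n\}$, where $L_i>0$ is the vehicle length and $q_i\in\mathbb{R}^{3+6n}$ has entry $-1$ at position $6i+6$, entry $1$ at position $6i$, and $0$ elsewhere. The lifted state is $\tilde x(t)=[x^\top(t),u^\top(t)]^\top\in\mathbb{R}^{4+7n}$, satisfying $\dot{\tilde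 x}(t)=\tilde A\tilde x(t)$ on $[t_k,t_{k+1})$ with $\tilde{A}=\begin{bmatrix}A_{\mathrm{c}} & B_{\mathrm{c}}\\ 0 & 0\end{bmatrix}$. The matrices $b_1=\begin{bmatrix}I_{3+6n}\\ 0_{(1+n)\times(3+6n)}\end{bmatrix}\in\mathbb{R}^{(4+7n)\times(3+6n)}$ and $b_2=\begin{bmatrix}0_{(3+6n)\times(1+n)}\\ I_{1+n}\end{bmatrix}\in\mathbb{R}^{(4+7n)\times(1+n)}$, where $I_m$ denotes the $m\times m$ identity matrix, satisfy $x=b_1^\top\tilde x$, $u=b_2^\top\tilde x$. $\|\cdot\|$ is the Euclidean norm / induced matrix norm and $\mu(M)=\lambda_{\max}((M+M^\top)/2)$ is the logarithmic norm. *)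

theory Defs
  imports Complex_Main "Jordan_Normal_Form.Char_Poly"
begin

definition vnorm :: "real vec \<Rightarrow> real" where
  "vnorm v = sqrt (\<Sum>j<dim_vec v. (v $ j)\<^sup>2)"

definition lambda_max :: "real mat \<Rightarrow> real" where
  "lambda_max M = Max {k. eigenvalue M k}"

definition lognorm :: "real mat \<Rightarrow> real" where
  "lognorm M = lambda_max ((1/2) \<cdot>\<^sub>m (M + transpose_mat M))"

definition nx :: "nat \<Rightarrow> nat" where "nx n = 3 + 6 * n"
definition nu :: "nat \<Rightarrow> nat" where "nu n = 1 + n"

definition Atil :: "nat \<Rightarrow> real mat \<Rightarrow> real mat \<Rightarrow> real mat" where
  "Atil n Ac Bc = four_block_mat Ac Bc (0\<^sub>m (nu n) (nx n)) (0\<^sub>m (nu n) (nu n))"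

definition b1 :: "nat \<Rightarrow> real mat" where
  "b1 n = mat (nx n + nu n) (nx n) (\<lambda>(r, c). if r = c then 1 else 0)"
definition b2 :: "nat \<Rightarrow> real mat" where
  "b2 n = mat (nx n + nu n) (nu n) (\<lambda>(r, c). if r = nx n + c then 1 else 0)"

(* 0-based index of the position p_j in the state vector
   [p0,v0,a0, e1,de1,p1,v1,a1,u1, ..., en,den,pn,vn,an,un] *)
definition ppos :: "nat \<Rightarrow> nat" where
  "ppos j = (if j = 0 then 0 else 6 * j - 1)"

(* q_i: +1 at position of p_(i-1), -1 at position of p_i, so q_i^T x = p_(i-1) - p_i *)
definition qv :: "nat \<Rightarrow> nat \<Rightarrow> real vec" where
  "qv n i = vec (nx n) (\<lambda>j. (if j = ppos (i - 1) then 1 else 0) - (if j = ppos i then 1 else 0))"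

definition dist_i :: "nat \<Rightarrow> (nat \<Rightarrow> real) \<Rightarrow> nat \<Rightarrow> real vec \<Rightarrow> real" where
  "dist_i n L i xv = qv n i \<bullet> xv - L i"

definition phi :: "nat \<Rightarrow> real mat \<Rightarrow> real mat \<Rightarrow> real" where
  "phi n Ac Bc = Max ((\<lambda>i. vnorm (transpose_mat (Ac * transpose_mat (b1 n) + Bc * transpose_mat (b2 n)) *\<^sub>v qv n i)) ` {2..n})"

end

(*
  Between two consecutive events t_k <= t < t_(k+1) the input is held (every
  communication instant is an event), so the lifted state xt = [x; u] solves
  xt' = Atil xt.  Since v . Atil v <= mu(Atil) |v|^2 (the Rayleigh bound for the
  largest eigenvalue of the symmetric part of Atil), a Gronwall argument on |xt|^2
  gives |xt(t)| <= exp (mu(Atil) (t - t_k)) |xt(t_k)|.  The distance rate is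
  d_i' = q_i^T (Ac b1^T + Bc b2^T) xt, hence |d_i'| <= phi |xt(t_k)| exp (mu(Atil) (t - t_k)),
  and integrating gives |d_i(t) - d_i(t_k)| <= phi |xt(t_k)| (exp (mu(Atil) (t - t_k)) - 1) / mu(Atil),
  which the triggering rule keeps below alpha.  All derivatives are one-sided
  (from the right), as in the hypotheses.
*)
theory Submission
  imports Defs "HOL-Analysis.Function_Topology" "HOL-Analysis.Convex"
begin

unbundle no inner_syntax

section \<open>One-sided derivatives on the real line\<close>

lemma right_deriv_less_imp_increment_le:
  fixes f f' :: "real \<Rightarrow> real"
  assumes "a \<le> b" and cont: "continuous_on {a..b} f"
    and deriv: "\<And>r. a \<le> r \<Longrightarrow> r < b \<Longrightarrow> (f has_real_derivative f' r) (at r within {r..})"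
    and less: "\<And>r. a \<le> r \<Longrightarrow> r < b \<Longrightarrow> f' r < c"
  shows "f b - f a \<le> c * (b - a)"
proof -
  define g where "g r = f r - f a - c * (r - a)" for r
  define S where "S = {a..b} \<inter> g -` {..0}"
  have "continuous_on {a..b} g" unfolding g_def by (intro continuous_intros cont)
  then have "closed S" unfolding S_def by (rule continuous_closed_preimage) auto
  moreover have "S \<subseteq> {a..b}" unfolding S_def by blast
  ultimately have "compact S" by (metis compact_Icc compact_Int_closed inf.absorb_iff2)
  moreover have "a \<in> S" unfolding S_def g_def using \<open>a \<le> b\<close> by simp
  ultimately obtain m where "m \<in> S" and m_max: "\<And>r. r \<in> S \<Longrightarrow> r \<le> m"
    using compact_attains_sup[of S] by blast
  then have "a \<le> m" "m \<le> b" "g m \<le> 0" unfolding S_def by auto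
  \<comment> \<open>The largest point of \<open>[a, b]\<close> where \<open>g \<le> 0\<close> cannot lie left of \<open>b\<close>, since \<open>g\<close> decreases to its right.\<close>
  have "m = b"
  proof (rule ccontr)
    assume "m \<noteq> b"
    with \<open>m \<le> b\<close> have "m < b" by simp
    have "(g has_real_derivative f' m - c) (at m within {m..})"
      unfolding g_def by (auto intro!: derivative_eq_intros deriv \<open>a \<le> m\<close> \<open>m < b\<close>)
    then obtain d where "d > 0" and dec: "\<And>h. h > 0 \<Longrightarrow> h < d \<Longrightarrow> g (m + h) < g m"
      using has_real_derivative_neg_dec_right less[OF \<open>a \<le> m\<close> \<open>m < b\<close>] by force
    define h where "h = min d (b - m) / 2"
    have "h > 0" "h < d" "m + h \<le> b"
      using \<open>d > 0\<close> \<open>m < b\<close> unfolding h_def by (auto simp: min_def field_simps)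
    then have "m + h \<in> S" using dec[of h] \<open>g m \<le> 0\<close> \<open>a \<le> m\<close> unfolding S_def by auto
    then show False using m_max[of "m + h"] \<open>h > 0\<close> by simp
  qed
  then show ?thesis using \<open>g m \<le> 0\<close> unfolding g_def by simp
qed

lemma right_deriv_nonpos_imp_le:
  fixes f f' :: "real \<Rightarrow> real"
  assumes "a \<le> b" and cont: "continuous_on {a..b} f"
    and deriv: "\<And>r. a \<le> r \<Longrightarrow> r < b \<Longrightarrow> (f has_real_derivative f' r) (at r within {r..})"
    and nonpos: "\<And>r. a \<le> r \<Longrightarrow> r < b \<Longrightarrow> f' r \<le> 0"
  shows "f b \<le> f a"
proof (rule field_le_epsilon)
  fix e :: real assume "e > 0"
  define c where "c = e / (b - a + 1)"
  have "c > 0" unfolding c_def using \<open>e > 0\<close> \<open>a \<le> b\<close> by simp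
  then have "f b - f a \<le> c * (b - a)"
    using nonpos by (intro right_deriv_less_imp_increment_le[OF \<open>a \<le> b\<close> cont deriv]) force+
  also have "c * (b - a) \<le> e"
    unfolding c_def using \<open>e > 0\<close> \<open>a \<le> b\<close> by (simp add: field_simps)
  finally show "f b \<le> f a + e" by simp
qed

lemma right_deriv_gronwall:
  fixes E E' :: "real \<Rightarrow> real"
  assumes "a \<le> b" and cont: "continuous_on {a..b} E"
    and deriv: "\<And>r. a \<le> r \<Longrightarrow> r < b \<Longrightarrow> (E has_real_derivative E' r) (at r within {r..})"
    and growth: "\<And>r. a \<le> r \<Longrightarrow> r < b \<Longrightarrow> E' r \<le> c * E r"
  shows "E b \<le> exp (c * (b - a)) * E a"
proof -
  define g where "g r = exp (- c * (r - a)) * E r" for r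
  have "g b \<le> g a"
  proof (rule right_deriv_nonpos_imp_le[OF \<open>a \<le> b\<close>])
    show "continuous_on {a..b} g" unfolding g_def by (intro continuous_intros cont)
    fix r assume r: "a \<le> r" "r < b"
    show "(g has_real_derivative exp (- c * (r - a)) * (E' r - c * E r)) (at r within {r..})"
      unfolding g_def by (auto intro!: derivative_eq_intros deriv[OF r] simp: algebra_simps)
    show "exp (- c * (r - a)) * (E' r - c * E r) \<le> 0"
      using growth[OF r] by (simp add: mult_nonneg_nonpos)
  qed
  then have "exp (c * (b - a)) * g b \<le> exp (c * (b - a)) * E a"
    unfolding g_def by simp
  then show ?thesis unfolding g_def by (simp add: mult.assoc[symmetric] exp_add[symmetric])
qed

lemma right_deriv_abs_le_imp_abs_increment_le:
  fixes f f' g g' :: "real \<Rightarrow> real"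
  assumes "a \<le> b" and "continuous_on {a..b} f" "continuous_on {a..b} g"
    and "\<And>r. a \<le> r \<Longrightarrow> r < b \<Longrightarrow> (f has_real_derivative f' r) (at r within {r..})"
    and "\<And>r. a \<le> r \<Longrightarrow> r < b \<Longrightarrow> (g has_real_derivative g' r) (at r within {r..})"
    and bound: "\<And>r. a \<le> r \<Longrightarrow> r < b \<Longrightarrow> \<bar>f' r\<bar> \<le> g' r"
  shows "\<bar>f b - f a\<bar> \<le> g b - g a"
proof -
  have "f b - g b \<le> f a - g a"
    by (rule right_deriv_nonpos_imp_le[of a b "\<lambda>r. f r - g r" "\<lambda>r. f' r - g' r"])
      (use assms in \<open>auto intro!: continuous_intros derivative_intros simp: abs_le_iff\<close>)
  moreover have "- f b - g b \<le> - f a - g a"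
    by (rule right_deriv_nonpos_imp_le[of a b "\<lambda>r. - f r - g r" "\<lambda>r. - f' r - g' r"])
      (use assms in \<open>auto intro!: continuous_intros derivative_intros simp: abs_le_iff\<close>)
  ultimately show ?thesis by linarith
qed

lemma abs_increment_le_of_exp_rate_bound:
  fixes f f' :: "real \<Rightarrow> real"
  assumes "a \<le> s" "s < b" and cont: "continuous_on {a..s} f"
    and deriv: "\<And>r. a \<le> r \<Longrightarrow> r < s \<Longrightarrow> (f has_real_derivative f' r) (at r within {r..})"
    and rate: "\<And>r. a \<le> r \<Longrightarrow> r < s \<Longrightarrow> \<bar>f' r\<bar> \<le> K * exp (\<mu> * (r - a))"
    and "K \<ge> 0" "\<mu> \<ge> 0" "\<alpha> > 0"
    and trigger: "K \<noteq> 0 \<longrightarrow> b - a \<le> ln (\<mu> * \<alpha> / K + 1) / \<mu>"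
  shows "\<bar>f s - f a\<bar> \<le> \<alpha>"
proof (cases "K = 0")
  case True
  have "\<bar>f s - f a\<bar> \<le> 0 - 0"
    by (rule right_deriv_abs_le_imp_abs_increment_le[of a s f "\<lambda>_. 0" f' "\<lambda>_. 0"])
      (use \<open>a \<le> s\<close> cont deriv rate True in auto)
  then show ?thesis using \<open>\<alpha> > 0\<close> by simp
next
  case False
  with \<open>K \<ge> 0\<close> have "K > 0" by simp
  with trigger have time: "b - a \<le> ln (\<mu> * \<alpha> / K + 1) / \<mu>" by simp
  \<comment> \<open>For \<open>\<mu> = 0\<close> the right-hand side is \<open>ln 1 / 0 = 0\<close>, contradicting \<open>a < b\<close>.\<close>
  have "\<mu> > 0"
    using time \<open>\<mu> \<ge> 0\<close> \<open>a \<le> s\<close> \<open>s < b\<close> by (cases "\<mu> = 0") auto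
  define G where "G r = K * (exp (\<mu> * (r - a)) - 1) / \<mu>" for r
  have "\<bar>f s - f a\<bar> \<le> G s - G a"
  proof (rule right_deriv_abs_le_imp_abs_increment_le[OF \<open>a \<le> s\<close> cont _ deriv _ rate])
    show "continuous_on {a..s} G" unfolding G_def using \<open>\<mu> > 0\<close> by (intro continuous_intros) auto
    show "(G has_real_derivative K * exp (\<mu> * (r - a))) (at r within {r..})" for r
      unfolding G_def using \<open>\<mu> > 0\<close> by (auto intro!: derivative_eq_intros)
  qed
  also have "G s - G a \<le> \<alpha>"
  proof -
    have "\<mu> * (s - a) \<le> \<mu> * (b - a)" using \<open>\<mu> > 0\<close> \<open>s < b\<close> by simp
    also have "\<dots> \<le> ln (\<mu> * \<alpha> / K + 1)"
      using time \<open>\<mu> > 0\<close> by (simp add: pos_le_divide_eq mult.commute)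
    finally have "\<mu> * (s - a) \<le> ln (\<mu> * \<alpha> / K + 1)" .
    moreover have "\<mu> * \<alpha> / K + 1 > 0"
      using \<open>\<mu> > 0\<close> \<open>K > 0\<close> \<open>\<alpha> > 0\<close> by (simp add: add_pos_pos)
    ultimately have "exp (\<mu> * (s - a)) \<le> \<mu> * \<alpha> / K + 1" by (simp add: ln_ge_iff)
    then show ?thesis
      unfolding G_def using \<open>\<mu> > 0\<close> \<open>K > 0\<close> by (simp add: field_simps)
  qed
  finally show ?thesis .
qed

section \<open>Rayleigh bound and logarithmic norm\<close>

lemma scalar_prod_eq_sum: "w \<in> carrier_vec N \<Longrightarrow> v \<bullet> w = (\<Sum>j<N. v $ j * w $ j)"
  by (simp add: scalar_prod_def atLeast0LessThan)

lemma scalar_prod_self_nonneg: "0 \<le> (v :: real vec) \<bullet> v"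
  unfolding scalar_prod_def by (intro sum_nonneg) simp

lemma scalar_prod_self_eq_0_iff:
  "(v :: real vec) \<in> carrier_vec N \<Longrightarrow> v \<bullet> v = 0 \<longleftrightarrow> v = 0\<^sub>v N"
  using conjugate_square_eq_0_vec[of v N] by (simp add: scalar_prod_def conjugate_vec_def)

lemma transpose_quadratic_form:
  fixes A :: "real mat"
  assumes "A \<in> carrier_mat N N" "u \<in> carrier_vec N" "w \<in> carrier_vec N"
  shows "u \<bullet> (transpose_mat A *\<^sub>v w) = w \<bullet> (A *\<^sub>v u)"
  using assms transpose_vec_mult_scalar[of A N N u w]
  by (simp add: comm_scalar_prod[of u N])

lemma quadratic_form_add_smult:
  fixes B :: "real mat"
  assumes B: "B \<in> carrier_mat N N" "transpose_mat B = B"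
    and u: "u \<in> carrier_vec N" and w: "w \<in> carrier_vec N"
  shows "(u + e \<cdot>\<^sub>v w) \<bullet> (B *\<^sub>v (u + e \<cdot>\<^sub>v w))
    = u \<bullet> (B *\<^sub>v u) + 2 * e * (w \<bullet> (B *\<^sub>v u)) + e\<^sup>2 * (w \<bullet> (B *\<^sub>v w))"
proof -
  have "u \<bullet> (B *\<^sub>v w) = w \<bullet> (B *\<^sub>v u)"
    using transpose_quadratic_form[OF B(1) w u] B(2) by simp
  then show ?thesis
    using B u w
    by (simp add: mult_add_distrib_mat_vec[of B N N] mult_mat_vec[of B N N]
        add_scalar_prod_distrib[of _ N] scalar_prod_add_distrib[of _ N]
        power2_eq_square algebra_simps)
qed

lemma linear_coeff_eq_0_of_quadratic_nonpos:
  fixes p c :: real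
  assumes "\<And>e. e * p + e\<^sup>2 * c \<le> 0"
  shows "p = 0"
proof (rule ccontr)
  assume "p \<noteq> 0"
  define e where "e = p / (\<bar>c\<bar> + 1)"
  have "0 < p\<^sup>2 / (\<bar>c\<bar> + 1)\<^sup>2"
    using \<open>p \<noteq> 0\<close> by (intro divide_pos_pos) (auto intro: add_nonneg_pos)
  also have "\<dots> = e * p - e\<^sup>2 * \<bar>c\<bar>"
    unfolding e_def by (simp add: divide_simps power2_eq_square) (simp add: algebra_simps)
  also have "\<dots> \<le> e * p + e\<^sup>2 * c"
    using mult_left_mono[of "- \<bar>c\<bar>" c "e\<^sup>2"] by simp
  finally show False using assms[of e] by simp
qed

lemma rayleigh_maximizer_is_eigenvector:
  fixes M :: "real mat"
  assumes M: "M \<in> carrier_mat N N" "transpose_mat M = M" and v0: "v0 \<in> carrier_vec N"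
    and bound: "\<And>v. v \<in> carrier_vec N \<Longrightarrow> v \<bullet> (M *\<^sub>v v) \<le> m * (v \<bullet> v)"
    and attained: "v0 \<bullet> (M *\<^sub>v v0) = m * (v0 \<bullet> v0)"
  shows "M *\<^sub>v v0 = m \<cdot>\<^sub>v v0"
proof -
  define w where "w = M *\<^sub>v v0 - m \<cdot>\<^sub>v v0"
  have w: "w \<in> carrier_vec N" unfolding w_def using M v0 by simp
  have "w \<bullet> (M *\<^sub>v v0) - m * (w \<bullet> v0) = w \<bullet> w"
    unfolding w_def using M v0 by (simp add: scalar_prod_minus_distrib[of _ N])
  have "e * (2 * (w \<bullet> w)) + e\<^sup>2 * (w \<bullet> (M *\<^sub>v w) - m * (w \<bullet> w)) \<le> 0" for e
  proof -
    let ?z = "v0 + e \<cdot>\<^sub>v w"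
    have id: "1\<^sub>m N \<in> carrier_mat N N" "transpose_mat (1\<^sub>m N) = (1\<^sub>m N :: real mat)" by auto
    have "?z \<bullet> (M *\<^sub>v ?z) - m * (?z \<bullet> (1\<^sub>m N *\<^sub>v ?z)) \<le> 0"
      using bound[of ?z] v0 w by simp
    then show ?thesis
      using attained \<open>w \<bullet> (M *\<^sub>v v0) - m * (w \<bullet> v0) = w \<bullet> w\<close> v0 w
      unfolding quadratic_form_add_smult[OF M v0 w] quadratic_form_add_smult[OF id v0 w]
      by (simp add: algebra_simps)
  qed
  then have "2 * (w \<bullet> w) = 0" by (rule linear_coeff_eq_0_of_quadratic_nonpos)
  then have "w = 0\<^sub>v N" using scalar_prod_self_eq_0_iff[OF w] by simp
  show ?thesis
  proof (rule eq_vecI)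
    fix i assume "i < dim_vec (m \<cdot>\<^sub>v v0)"
    with v0 have "i < N" by simp
    with \<open>w = 0\<^sub>v N\<close> have "w $ i = 0" by simp
    then show "(M *\<^sub>v v0) $ i = (m \<cdot>\<^sub>v v0) $ i" unfolding w_def using M v0 \<open>i < N\<close> by simp
  qed (use M v0 in simp)
qed

lemma quadratic_form_eq_sum:
  fixes M :: "real mat"
  assumes "M \<in> carrier_mat N N" "v \<in> carrier_vec N"
  shows "v \<bullet> (M *\<^sub>v v) = (\<Sum>i<N. \<Sum>j<N. M $$ (i, j) * v $ i * v $ j)"
  using assms by (simp add: scalar_prod_def mult_mat_vec_def row_def atLeast0LessThan
      sum_distrib_left algebra_simps)

lemma quadratic_form_attains_max_on_unit_sphere:
  fixes M :: "real mat"
  assumes M: "M \<in> carrier_mat N N" and "N > 0"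
  obtains v0 where "v0 \<in> carrier_vec N" "v0 \<bullet> v0 = 1"
    "\<And>v. v \<in> carrier_vec N \<Longrightarrow> v \<bullet> v = 1 \<Longrightarrow> v \<bullet> (M *\<^sub>v v) \<le> v0 \<bullet> (M *\<^sub>v v0)"
proof -
  let ?X = "product_topology (\<lambda>_. euclideanreal) {..<N}"
  define Q where "Q f = (\<Sum>i<N. \<Sum>j<N. M $$ (i, j) * f i * f j)" for f :: "nat \<Rightarrow> real"
  define K where "K = PiE {..<N} (\<lambda>_. {-1..1}) \<inter> {f \<in> topspace ?X. (\<Sum>i<N. (f i)\<^sup>2) \<in> {1}}"
  have proj: "continuous_map ?X euclideanreal (\<lambda>f. f i)" if "i < N" for i
    using continuous_map_product_projection[of i "{..<N}" "\<lambda>_. euclideanreal"] that by simp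
  have "compactin ?X K"
    unfolding K_def
  proof (rule compact_Int_closedin)
    show "compactin ?X (PiE {..<N} (\<lambda>_. {-1..1}))"
      by (subst compactin_PiE) auto
    show "closedin ?X {f \<in> topspace ?X. (\<Sum>i<N. (f i)\<^sup>2) \<in> {1}}"
      unfolding power2_eq_square
      by (rule closedin_continuous_map_preimage[where Y = euclideanreal])
        (auto intro!: continuous_map_sum continuous_map_real_mult proj)
  qed
  moreover have "continuous_map ?X euclideanreal Q"
    unfolding Q_def
    by (intro continuous_map_sum continuous_map_real_mult continuous_map_real_mult_left proj) auto
  ultimately have "compact (Q ` K)" using image_compactin by fastforce
  have in_K: "restrict (\<lambda>i. v $ i) {..<N} \<in> K" if v: "v \<in> carrier_vec N" "v \<bullet> v = 1" for v
  proof -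
    have "(v $ i)\<^sup>2 \<le> 1" if "i < N" for i
      using v member_le_sum[of i "{..<N}" "\<lambda>i. (v $ i)\<^sup>2"] that
      by (simp add: scalar_prod_def power2_eq_square atLeast0LessThan)
    then have "\<bar>v $ i\<bar> \<le> 1" if "i < N" for i using that by (simp add: abs_square_le_1)
    then show ?thesis
      using v by (auto simp: K_def topspace_product_topology abs_le_iff
          scalar_prod_def power2_eq_square atLeast0LessThan)
  qed
  have "unit_vec N 0 \<bullet> unit_vec N 0 = (1 :: real)" using \<open>N > 0\<close> by simp
  then have "K \<noteq> {}" using in_K[of "unit_vec N 0"] by auto
  then obtain f0 where "f0 \<in> K" and f0_max: "\<And>f. f \<in> K \<Longrightarrow> Q f \<le> Q f0"
    using compact_attains_sup[OF \<open>compact (Q ` K)\<close>] by fastforce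
  have Q_vec: "Q f = vec N f \<bullet> (M *\<^sub>v vec N f)" for f
    unfolding Q_def using quadratic_form_eq_sum[OF M, of "vec N f"] by simp
  show thesis
  proof (rule that[of "vec N f0"])
    show "vec N f0 \<bullet> vec N f0 = 1"
      using \<open>f0 \<in> K\<close> by (simp add: K_def scalar_prod_def power2_eq_square atLeast0LessThan)
    fix v :: "real vec" assume v: "v \<in> carrier_vec N" "v \<bullet> v = 1"
    have "Q (restrict (\<lambda>i. v $ i) {..<N}) \<le> Q f0" by (rule f0_max[OF in_K[OF v]])
    moreover have "vec N (restrict (\<lambda>i. v $ i) {..<N}) = v" using v by auto
    ultimately show "v \<bullet> (M *\<^sub>v v) \<le> vec N f0 \<bullet> (M *\<^sub>v vec N f0)" unfolding Q_vec by simp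
  qed simp
qed

lemma symmetric_quadratic_form_le_eigenvalue:
  fixes M :: "real mat"
  assumes M: "M \<in> carrier_mat N N" "transpose_mat M = M" and "N > 0"
  obtains m where "eigenvalue M m" "\<And>v. v \<in> carrier_vec N \<Longrightarrow> v \<bullet> (M *\<^sub>v v) \<le> m * (v \<bullet> v)"
proof -
  obtain v0 where v0: "v0 \<in> carrier_vec N" "v0 \<bullet> v0 = 1"
    and v0_max: "\<And>v. v \<in> carrier_vec N \<Longrightarrow> v \<bullet> v = 1 \<Longrightarrow> v \<bullet> (M *\<^sub>v v) \<le> v0 \<bullet> (M *\<^sub>v v0)"
    using quadratic_form_attains_max_on_unit_sphere[OF M(1) \<open>N > 0\<close>] by blast
  define m where "m = v0 \<bullet> (M *\<^sub>v v0)"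
  have bound: "v \<bullet> (M *\<^sub>v v) \<le> m * (v \<bullet> v)" if v: "v \<in> carrier_vec N" for v
  proof (cases "v = 0\<^sub>v N")
    case False
    define c where "c = 1 / sqrt (v \<bullet> v)"
    have "v \<bullet> v > 0"
      using scalar_prod_self_nonneg[of v] scalar_prod_self_eq_0_iff[OF v] False by linarith
    then have c2: "c\<^sup>2 * (v \<bullet> v) = 1" unfolding c_def by (simp add: power_divide)
    then have "(c \<cdot>\<^sub>v v) \<bullet> (M *\<^sub>v (c \<cdot>\<^sub>v v)) \<le> m"
      using v0_max[of "c \<cdot>\<^sub>v v"] v unfolding m_def by (simp add: power2_eq_square)
    then have "c\<^sup>2 * (v \<bullet> (M *\<^sub>v v)) \<le> c\<^sup>2 * (m * (v \<bullet> v))"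
      using M v c2 by (simp add: mult_mat_vec[of M N N] power2_eq_square algebra_simps)
    moreover have "c\<^sup>2 > 0" using c2 by (cases "c = 0") auto
    ultimately show ?thesis by simp
  qed (use M in simp)
  have "M *\<^sub>v v0 = m \<cdot>\<^sub>v v0"
    by (rule rayleigh_maximizer_is_eigenvector[OF M v0(1) bound]) (simp_all add: m_def v0)
  then have "eigenvalue M m"
    using M v0 unfolding eigenvalue_def eigenvector_def
    by (auto intro!: exI[of _ v0] dest: scalar_prod_self_eq_0_iff)
  then show thesis using bound by (rule that)
qed

lemma eigenvalue_le_lambda_max:
  fixes M :: "real mat"
  assumes "M \<in> carrier_mat N N" "eigenvalue M m"
  shows "m \<le> lambda_max M"
proof -
  have "char_poly M \<noteq> 0" using degree_monic_char_poly[OF assms(1)] by auto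
  then have "finite {k. poly (char_poly M) k = 0}" by (rule poly_roots_finite)
  then have "finite {k. eigenvalue M k}" using eigenvalue_root_char_poly[OF assms(1)] by simp
  then show ?thesis unfolding lambda_max_def using assms(2) by (simp add: Max_ge)
qed

lemma symmetric_quadratic_form_le_lambda_max:
  fixes M :: "real mat"
  assumes M: "M \<in> carrier_mat N N" "transpose_mat M = M" and v: "v \<in> carrier_vec N"
  shows "v \<bullet> (M *\<^sub>v v) \<le> lambda_max M * (v \<bullet> v)"
proof (cases "N = 0")
  case True
  then show ?thesis using M v by (simp add: scalar_prod_def)
next
  case False
  then obtain m where "eigenvalue M m" and "v \<bullet> (M *\<^sub>v v) \<le> m * (v \<bullet> v)"
    using symmetric_quadratic_form_le_eigenvalue[OF M] v by blast
  note this(2)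
  also have "m * (v \<bullet> v) \<le> lambda_max M * (v \<bullet> v)"
    using eigenvalue_le_lambda_max[OF M(1) \<open>eigenvalue M m\<close>] scalar_prod_self_nonneg[of v]
    by (rule mult_right_mono)
  finally show ?thesis .
qed

lemma quadratic_form_le_lognorm:
  fixes A :: "real mat"
  assumes A: "A \<in> carrier_mat N N" and v: "v \<in> carrier_vec N"
  shows "v \<bullet> (A *\<^sub>v v) \<le> lognorm A * (v \<bullet> v)"
proof -
  define S where "S = (1/2) \<cdot>\<^sub>m (A + transpose_mat A)"
  have S: "S \<in> carrier_mat N N" "transpose_mat S = S"
    unfolding S_def using A by (auto intro!: eq_matI)
  have "S *\<^sub>v v = (1/2) \<cdot>\<^sub>v (A *\<^sub>v v + transpose_mat A *\<^sub>v v)"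
    using A v by (auto simp: S_def scalar_prod_def sum_distrib_left sum.distrib algebra_simps)
  then have "v \<bullet> (S *\<^sub>v v) = v \<bullet> (A *\<^sub>v v)"
    using A v transpose_quadratic_form[OF A v v] by (simp add: scalar_prod_add_distrib[of _ N])
  then show ?thesis
    using symmetric_quadratic_form_le_lambda_max[OF S v] unfolding lognorm_def S_def by simp
qed

lemma diagonal_le_lognorm:
  fixes A :: "real mat"
  assumes "A \<in> carrier_mat N N" "i < N"
  shows "A $$ (i, i) \<le> lognorm A"
  using quadratic_form_le_lognorm[OF assms(1) unit_vec_carrier[of N i]] assms
  by (simp add: mult_mat_vec_def)

section \<open>Norm growth of time-dependent vectors\<close>

lemma vnorm_eq_sqrt_scalar_prod: "vnorm v = sqrt (v \<bullet> v)"
  unfolding vnorm_def scalar_prod_def by (simp add: atLeast0LessThan power2_eq_square)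

lemma vnorm_nonneg: "0 \<le> vnorm v"
  by (simp add: vnorm_def sum_nonneg)

lemma abs_scalar_prod_le_vnorm:
  fixes v w :: "real vec"
  assumes "v \<in> carrier_vec N" "w \<in> carrier_vec N"
  shows "\<bar>v \<bullet> w\<bar> \<le> vnorm v * vnorm w"
proof -
  have "(v \<bullet> w)\<^sup>2 \<le> (v \<bullet> v) * (w \<bullet> w)"
    using assms Cauchy_Schwarz_ineq_sum[of "\<lambda>i. v $ i" "\<lambda>i. w $ i" "{0..<N}"]
    by (simp add: scalar_prod_def power2_eq_square)
  then have "sqrt ((v \<bullet> w)\<^sup>2) \<le> sqrt ((v \<bullet> v) * (w \<bullet> w))" by (rule real_sqrt_le_mono)
  then show ?thesis by (simp add: vnorm_eq_sqrt_scalar_prod real_sqrt_mult)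
qed

lemma scalar_prod_continuous_on:
  fixes y z :: "real \<Rightarrow> real vec"
  assumes "\<And>s. s \<in> S \<Longrightarrow> z s \<in> carrier_vec N"
    and "\<And>j. j < N \<Longrightarrow> continuous_on S (\<lambda>s. y s $ j)"
    and "\<And>j. j < N \<Longrightarrow> continuous_on S (\<lambda>s. z s $ j)"
  shows "continuous_on S (\<lambda>s. y s \<bullet> z s)"
proof -
  have "continuous_on S (\<lambda>s. \<Sum>j<N. y s $ j * z s $ j)"
    using assms(2,3) by (intro continuous_intros) auto
  then show ?thesis
    by (rule continuous_on_eq) (simp add: assms(1)[THEN scalar_prod_eq_sum])
qed

lemma scalar_prod_has_right_derivative:
  fixes y z :: "real \<Rightarrow> real vec"
  assumes z: "\<And>s. r \<le> s \<Longrightarrow> z s \<in> carrier_vec N" and "z' \<in> carrier_vec N"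
    and y': "\<And>j. j < N \<Longrightarrow> ((\<lambda>s. y s $ j) has_real_derivative y' $ j) (at r within {r..})"
    and z': "\<And>j. j < N \<Longrightarrow> ((\<lambda>s. z s $ j) has_real_derivative z' $ j) (at r within {r..})"
  shows "((\<lambda>s. y s \<bullet> z s) has_real_derivative y' \<bullet> z r + y r \<bullet> z') (at r within {r..})"
proof -
  have "((\<lambda>s. \<Sum>j<N. y s $ j * z s $ j) has_real_derivative
      (\<Sum>j<N. y' $ j * z r $ j + z' $ j * y r $ j)) (at r within {r..})"
    by (intro DERIV_sum DERIV_mult y' z') simp_all
  moreover have "(\<Sum>j<N. y' $ j * z r $ j + z' $ j * y r $ j) = y' \<bullet> z r + y r \<bullet> z'"
    using z[of r] \<open>z' \<in> carrier_vec N\<close>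
    by (simp add: scalar_prod_def atLeast0LessThan sum.distrib mult.commute)
  moreover have "\<forall>\<^sub>F s in at r within {r..}. (\<Sum>j<N. y s $ j * z s $ j) = y s \<bullet> z s"
    by (auto simp: eventually_at_filter z[THEN scalar_prod_eq_sum])
  ultimately show ?thesis
    using z[of r] by (simp add: has_field_derivative_cong_eventually scalar_prod_eq_sum)
qed

lemma vnorm_le_exp_lognorm:
  fixes z :: "real \<Rightarrow> real vec" and M :: "real mat"
  assumes M: "M \<in> carrier_mat N N" and "a \<le> b"
    and z: "\<And>s. a \<le> s \<Longrightarrow> z s \<in> carrier_vec N"
    and cont: "\<And>j. j < N \<Longrightarrow> continuous_on {a..b} (\<lambda>s. z s $ j)"
    and deriv: "\<And>r j. a \<le> r \<Longrightarrow> r < b \<Longrightarrow> j < N \<Longrightarrow>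
      ((\<lambda>s. z s $ j) has_real_derivative (M *\<^sub>v z r) $ j) (at r within {r..})"
  shows "vnorm (z b) \<le> exp (lognorm M * (b - a)) * vnorm (z a)"
proof -
  define E where "E s = z s \<bullet> z s" for s
  have "E b \<le> exp (2 * lognorm M * (b - a)) * E a"
  proof (rule right_deriv_gronwall[OF \<open>a \<le> b\<close>])
    show "continuous_on {a..b} E"
      unfolding E_def using z cont by (intro scalar_prod_continuous_on) auto
    fix r assume r: "a \<le> r" "r < b"
    have "(E has_real_derivative (M *\<^sub>v z r) \<bullet> z r + z r \<bullet> (M *\<^sub>v z r)) (at r within {r..})"
      unfolding E_def using M z r
      by (intro scalar_prod_has_right_derivative[where N = N] deriv) auto
    moreover have "(M *\<^sub>v z r) \<bullet> z r + z r \<bullet> (M *\<^sub>v z r) = 2 * (z r \<bullet> (M *\<^sub>v z r))"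
      using M z[of r] r comm_scalar_prod[of "M *\<^sub>v z r" N "z r"] by simp
    ultimately show "(E has_real_derivative 2 * (z r \<bullet> (M *\<^sub>v z r))) (at r within {r..})"
      by simp
    show "2 * (z r \<bullet> (M *\<^sub>v z r)) \<le> 2 * lognorm M * E r"
      unfolding E_def using quadratic_form_le_lognorm[OF M z] r by simp
  qed
  then have "sqrt (E b) \<le> sqrt ((exp (lognorm M * (b - a)))\<^sup>2 * E a)"
    by (simp add: power2_eq_square mult.assoc flip: exp_add)
  then show ?thesis
    unfolding E_def vnorm_eq_sqrt_scalar_prod by (simp add: real_sqrt_mult)
qed

section \<open>The lifted platoon model\<close>

lemma b1_transpose_mult_append:
  assumes x: "x \<in> carrier_vec (nx n)" and u: "u \<in> carrier_vec (nu n)"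
  shows "transpose_mat (b1 n) *\<^sub>v (x @\<^sub>v u) = x"
proof (rule eq_vecI)
  fix i assume "i < dim_vec x"
  with x have i: "i < nx n" by simp
  have "(transpose_mat (b1 n) *\<^sub>v (x @\<^sub>v u)) $ i
      = (\<Sum>c\<in>{0..<nx n + nu n}. (if c = i then 1 else 0) * (x @\<^sub>v u) $ c)"
    using i x u by (auto simp: b1_def scalar_prod_def intro!: sum.cong)
  also have "\<dots> = (\<Sum>c\<in>{0..<nx n + nu n}. if c = i then (x @\<^sub>v u) $ i else 0)"
    by (intro sum.cong) auto
  finally show "(transpose_mat (b1 n) *\<^sub>v (x @\<^sub>v u)) $ i = x $ i" using i x u by simp
qed (use x in \<open>simp add: b1_def\<close>)

lemma b2_transpose_mult_append:
  assumes x: "x \<in> carrier_vec (nx n)" and u: "u \<in> carrier_vec (nu n)"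
  shows "transpose_mat (b2 n) *\<^sub>v (x @\<^sub>v u) = u"
proof (rule eq_vecI)
  fix i assume "i < dim_vec u"
  with u have i: "i < nu n" by simp
  have "(transpose_mat (b2 n) *\<^sub>v (x @\<^sub>v u)) $ i
      = (\<Sum>c\<in>{0..<nx n + nu n}. (if c = nx n + i then 1 else 0) * (x @\<^sub>v u) $ c)"
    using i x u by (auto simp: b2_def scalar_prod_def intro!: sum.cong)
  also have "\<dots> = (\<Sum>c\<in>{0..<nx n + nu n}. if c = nx n + i then (x @\<^sub>v u) $ (nx n + i) else 0)"
    by (intro sum.cong) auto
  finally show "(transpose_mat (b2 n) *\<^sub>v (x @\<^sub>v u)) $ i = u $ i" using i x u by simp
qed (use u in \<open>simp add: b2_def\<close>)

lemma b1_b2_combination_mult_append: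
  assumes Ac: "Ac \<in> carrier_mat (nx n) (nx n)" and Bc: "Bc \<in> carrier_mat (nx n) (nu n)"
    and x: "x \<in> carrier_vec (nx n)" and u: "u \<in> carrier_vec (nu n)"
  shows "(Ac * transpose_mat (b1 n) + Bc * transpose_mat (b2 n)) *\<^sub>v (x @\<^sub>v u) = Ac *\<^sub>v x + Bc *\<^sub>v u"
proof -
  have "transpose_mat (b1 n) \<in> carrier_mat (nx n) (nx n + nu n)"
    "transpose_mat (b2 n) \<in> carrier_mat (nu n) (nx n + nu n)"
    by (simp_all add: b1_def b2_def)
  then show ?thesis
    using Ac Bc x u b1_transpose_mult_append[OF x u] b2_transpose_mult_append[OF x u]
    by (simp add: add_mult_distrib_mat_vec[of _ "nx n" "nx n + nu n"])
qed

lemma Atil_mult_append: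
  assumes Ac: "Ac \<in> carrier_mat (nx n) (nx n)" and Bc: "Bc \<in> carrier_mat (nx n) (nu n)"
    and x: "x \<in> carrier_vec (nx n)" and u: "u \<in> carrier_vec (nu n)"
  shows "Atil n Ac Bc *\<^sub>v (x @\<^sub>v u) = (Ac *\<^sub>v x + Bc *\<^sub>v u) @\<^sub>v 0\<^sub>v (nu n)"
proof -
  have "Atil n Ac Bc *\<^sub>v (x @\<^sub>v u)
      = (Ac *\<^sub>v x + Bc *\<^sub>v u) @\<^sub>v (0\<^sub>m (nu n) (nx n) *\<^sub>v x + 0\<^sub>m (nu n) (nu n) *\<^sub>v u)"
    unfolding Atil_def by (rule four_block_mat_mult_vec[OF Ac Bc _ _ x u]) auto
  also have "0\<^sub>m (nu n) (nx n) *\<^sub>v x + 0\<^sub>m (nu n) (nu n) *\<^sub>v u = 0\<^sub>v (nu n)"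
    using x u by auto
  finally show ?thesis .
qed

lemma lognorm_Atil_nonneg:
  assumes "Ac \<in> carrier_mat (nx n) (nx n)" "Bc \<in> carrier_mat (nx n) (nu n)"
  shows "0 \<le> lognorm (Atil n Ac Bc)"
proof -
  let ?N = "nx n + nu n"
  have "Atil n Ac Bc \<in> carrier_mat ?N ?N" unfolding Atil_def using assms by auto
  then have "Atil n Ac Bc $$ (?N - 1, ?N - 1) \<le> lognorm (Atil n Ac Bc)"
    by (rule diagonal_le_lognorm) (simp add: nu_def)
  moreover have "Atil n Ac Bc $$ (?N - 1, ?N - 1) = 0"
    unfolding Atil_def using assms by (simp add: nx_def nu_def)
  ultimately show ?thesis by simp
qed

lemma lifted_state_has_right_derivative:
  fixes x :: "real \<Rightarrow> real vec"
  assumes Ac: "Ac \<in> carrier_mat (nx n) (nx n)" and Bc: "Bc \<in> carrier_mat (nx n) (nu n)"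
    and u: "u \<in> carrier_vec (nu n)" and x: "\<And>s. r \<le> s \<Longrightarrow> x s \<in> carrier_vec (nx n)"
    and dyn: "\<And>j. j < nx n \<Longrightarrow>
      ((\<lambda>s. x s $ j) has_real_derivative (Ac *\<^sub>v x r + Bc *\<^sub>v u) $ j) (at r within {r..})"
    and j: "j < nx n + nu n"
  shows "((\<lambda>s. (x s @\<^sub>v u) $ j) has_real_derivative (Atil n Ac Bc *\<^sub>v (x r @\<^sub>v u)) $ j)
    (at r within {r..})"
proof -
  have component: "(x s @\<^sub>v u) $ j = (if j < nx n then x s $ j else u $ (j - nx n))" if "r \<le> s" for s
    using x[OF that] u j by auto
  then have "\<forall>\<^sub>F s in at r within {r..}. (x s @\<^sub>v u) $ j = (if j < nx n then x s $ j else u $ (j - nx n))"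
    by (auto simp: eventually_at_filter)
  moreover note component[of r]
  moreover have "((\<lambda>s. if j < nx n then x s $ j else u $ (j - nx n)) has_real_derivative
      (Atil n Ac Bc *\<^sub>v (x r @\<^sub>v u)) $ j) (at r within {r..})"
    using dyn[of j] j Ac Bc x[of r] u by (simp add: Atil_mult_append)
  ultimately show ?thesis by (simp add: has_field_derivative_cong_eventually)
qed

lemma lifted_state_vnorm_le:
  fixes x :: "real \<Rightarrow> real vec"
  assumes Ac: "Ac \<in> carrier_mat (nx n) (nx n)" and Bc: "Bc \<in> carrier_mat (nx n) (nu n)"
    and x: "\<And>s. 0 \<le> s \<Longrightarrow> x s \<in> carrier_vec (nx n)"
    and x_cont: "\<And>j. j < nx n \<Longrightarrow> continuous_on {0..} (\<lambda>s. x s $ j)"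
    and u: "u \<in> carrier_vec (nu n)" and "0 \<le> a" "a \<le> b"
    and dyn: "\<And>r j. a \<le> r \<Longrightarrow> r < b \<Longrightarrow> j < nx n \<Longrightarrow>
      ((\<lambda>s. x s $ j) has_real_derivative (Ac *\<^sub>v x r + Bc *\<^sub>v u) $ j) (at r within {r..})"
  shows "vnorm (x b @\<^sub>v u) \<le> exp (lognorm (Atil n Ac Bc) * (b - a)) * vnorm (x a @\<^sub>v u)"
proof (rule vnorm_le_exp_lognorm[where z = "\<lambda>s. x s @\<^sub>v u"])
  show "Atil n Ac Bc \<in> carrier_mat (nx n + nu n) (nx n + nu n)"
    unfolding Atil_def using Ac Bc by auto
  fix j assume j: "j < nx n + nu n"
  have "continuous_on {a..b} (\<lambda>s. x s $ j)" if "j < nx n"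
    using continuous_on_subset[OF x_cont[OF that]] \<open>0 \<le> a\<close> by auto
  then have "continuous_on {a..b} (\<lambda>s. if j < nx n then x s $ j else u $ (j - nx n))"
    by (cases "j < nx n") auto
  then show "continuous_on {a..b} (\<lambda>s. (x s @\<^sub>v u) $ j)"
  proof (rule continuous_on_eq)
    fix s assume "s \<in> {a..b}"
    with x \<open>0 \<le> a\<close> have "x s \<in> carrier_vec (nx n)" by simp
    with u j show "(if j < nx n then x s $ j else u $ (j - nx n)) = (x s @\<^sub>v u) $ j" by simp
  qed
  fix r assume "a \<le> r" "r < b"
  with j \<open>0 \<le> a\<close> show "((\<lambda>s. (x s @\<^sub>v u) $ j) has_real_derivative (Atil n Ac Bc *\<^sub>v (x r @\<^sub>v u)) $ j)
      (at r within {r..})"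
    by (intro lifted_state_has_right_derivative[OF Ac Bc u] x dyn) auto
qed (use x u \<open>0 \<le> a\<close> \<open>a \<le> b\<close> in auto)

lemma abs_distance_rate_le:
  assumes Ac: "Ac \<in> carrier_mat (nx n) (nx n)" and Bc: "Bc \<in> carrier_mat (nx n) (nu n)"
    and x: "x \<in> carrier_vec (nx n)" and u: "u \<in> carrier_vec (nu n)" and i: "i \<in> {2..n}"
  shows "\<bar>qv n i \<bullet> (Ac *\<^sub>v x + Bc *\<^sub>v u)\<bar> \<le> phi n Ac Bc * vnorm (x @\<^sub>v u)"
proof -
  define C where "C = Ac * transpose_mat (b1 n) + Bc * transpose_mat (b2 n)"
  define w where "w = transpose_mat C *\<^sub>v qv n i"
  have C: "C \<in> carrier_mat (nx n) (nx n + nu n)" unfolding C_def using Ac Bc by (auto simp: b1_def b2_def)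
  have q: "qv n i \<in> carrier_vec (nx n)" by (simp add: qv_def)
  have "w \<bullet> (x @\<^sub>v u) = qv n i \<bullet> (C *\<^sub>v (x @\<^sub>v u))"
    unfolding w_def using x u by (intro transpose_vec_mult_scalar[OF C _ q]) simp
  then have "qv n i \<bullet> (Ac *\<^sub>v x + Bc *\<^sub>v u) = w \<bullet> (x @\<^sub>v u)"
    unfolding C_def b1_b2_combination_mult_append[OF Ac Bc x u] by simp
  also have "\<bar>w \<bullet> (x @\<^sub>v u)\<bar> \<le> vnorm w * vnorm (x @\<^sub>v u)"
    using C q x u by (intro abs_scalar_prod_le_vnorm[where N = "nx n + nu n"]) (auto simp: w_def)
  also have "\<dots> \<le> phi n Ac Bc * vnorm (x @\<^sub>v u)"
  proof (rule mult_right_mono)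
    show "vnorm w \<le> phi n Ac Bc" unfolding phi_def w_def C_def using i by (intro Max_ge) auto
  qed (rule vnorm_nonneg)
  finally show ?thesis .
qed

lemma phi_nonneg: "i \<in> {2..n} \<Longrightarrow> 0 \<le> phi n Ac Bc"
  unfolding phi_def by (rule order_trans[OF vnorm_nonneg Max_ge]) auto

lemma held_input_constant_between_events:
  fixes u :: "real \<Rightarrow> 'a" and t :: "nat \<Rightarrow> real"
  assumes "T > 0"
    and held: "\<And>j s. real j * T \<le> s \<Longrightarrow> s < real (Suc j) * T \<Longrightarrow> u s = u (real j * T)"
    and t: "strict_mono t" and grid: "\<And>j. \<exists>k. t k = real j * T"
    and "0 \<le> t k" "t k \<le> s" "s < t (Suc k)"
  shows "u s = u (t k)"
proof -
  define j where "j = nat \<lfloor>t k / T\<rfloor>"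
  have "real j = of_int \<lfloor>t k / T\<rfloor>" unfolding j_def using \<open>0 \<le> t k\<close> \<open>T > 0\<close> by simp
  then have "real j \<le> t k / T" "t k / T < real j + 1" by linarith+
  then have j: "real j * T \<le> t k" "t k < real (Suc j) * T"
    using \<open>T > 0\<close> by (simp_all add: pos_le_divide_eq pos_divide_less_eq algebra_simps)
  obtain k' where k': "t k' = real (Suc j) * T" using grid by blast
  with j t have "k < k'" by (metis strict_mono_less)
  then have "t (Suc k) \<le> real (Suc j) * T" using k' t by (metis Suc_leI strict_mono_less_eq)
  then show ?thesis using held[of j s] held[of j "t k"] j \<open>t k \<le> s\<close> \<open>s < t (Suc k)\<close> by simp
qed

lemma distance_change_le_between_events:
  fixes x :: "real \<Rightarrow> real vec"
  assumes Ac: "Ac \<in> carrier_mat (nx n) (nx n)" and Bc: "Bc \<in> carrier_mat (nx n) (nu n)"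
    and x: "\<And>s. 0 \<le> s \<Longrightarrow> x s \<in> carrier_vec (nx n)"
    and x_cont: "\<And>j. j < nx n \<Longrightarrow> continuous_on {0..} (\<lambda>s. x s $ j)"
    and u: "u \<in> carrier_vec (nu n)" and "0 \<le> a" "a \<le> s" "s < b"
    and dyn: "\<And>r j. a \<le> r \<Longrightarrow> r < b \<Longrightarrow> j < nx n \<Longrightarrow>
      ((\<lambda>s. x s $ j) has_real_derivative (Ac *\<^sub>v x r + Bc *\<^sub>v u) $ j) (at r within {r..})"
    and i: "i \<in> {2..n}" and "\<alpha> > 0"
    and trigger: "phi n Ac Bc * vnorm (x a @\<^sub>v u) \<noteq> 0 \<longrightarrow>
      b - a \<le> ln (lognorm (Atil n Ac Bc) * \<alpha> / (phi n Ac Bc * vnorm (x a @\<^sub>v u)) + 1)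
        / lognorm (Atil n Ac Bc)"
  shows "\<bar>dist_i n L i (x s) - dist_i n L i (x a)\<bar> \<le> \<alpha>"
proof -
  define \<mu> where "\<mu> = lognorm (Atil n Ac Bc)"
  define K where "K = phi n Ac Bc * vnorm (x a @\<^sub>v u)"
  have "\<bar>qv n i \<bullet> x s - qv n i \<bullet> x a\<bar> \<le> \<alpha>"
  proof (rule abs_increment_le_of_exp_rate_bound[OF \<open>a \<le> s\<close> \<open>s < b\<close>])
    show "continuous_on {a..s} (\<lambda>r. qv n i \<bullet> x r)"
      using x x_cont \<open>0 \<le> a\<close>
      by (intro scalar_prod_continuous_on[where N = "nx n"])
        (auto intro!: continuous_on_subset[OF x_cont])
    fix r assume r: "a \<le> r" "r < s"
    have "((\<lambda>r. qv n i \<bullet> x r) has_real_derivative 0\<^sub>v (nx n) \<bullet> x r + qv n i \<bullet> (Ac *\<^sub>v x r + Bc *\<^sub>v u))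
        (at r within {r..})"
      using x r \<open>0 \<le> a\<close> \<open>s < b\<close> Ac Bc u by (intro scalar_prod_has_right_derivative dyn) auto
    with x r \<open>0 \<le> a\<close> show "((\<lambda>r. qv n i \<bullet> x r) has_real_derivative qv n i \<bullet> (Ac *\<^sub>v x r + Bc *\<^sub>v u))
        (at r within {r..})"
      by simp
    have "\<bar>qv n i \<bullet> (Ac *\<^sub>v x r + Bc *\<^sub>v u)\<bar> \<le> phi n Ac Bc * vnorm (x r @\<^sub>v u)"
      using Ac Bc x u r \<open>0 \<le> a\<close> i by (intro abs_distance_rate_le) auto
    also have "\<dots> \<le> phi n Ac Bc * (exp (\<mu> * (r - a)) * vnorm (x a @\<^sub>v u))"
      unfolding \<mu>_def using r \<open>s < b\<close> phi_nonneg[OF i]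
      by (intro mult_left_mono lifted_state_vnorm_le[OF Ac Bc x x_cont u \<open>0 \<le> a\<close>] dyn) auto
    finally show "\<bar>qv n i \<bullet> (Ac *\<^sub>v x r + Bc *\<^sub>v u)\<bar> \<le> K * exp (\<mu> * (r - a))"
      unfolding K_def by (simp only: ac_simps)
  next
    show "0 \<le> K" unfolding K_def using phi_nonneg[OF i] vnorm_nonneg by simp
    show "0 \<le> \<mu>" unfolding \<mu>_def using lognorm_Atil_nonneg[OF Ac Bc] .
  qed (use \<open>\<alpha> > 0\<close> trigger in \<open>simp_all add: K_def \<mu>_def\<close>)
  then show ?thesis by (simp add: dist_i_def)
qed

theorem theorem2:
  fixes n :: nat
    and Ac Bc :: "real mat"
    and L :: "nat \<Rightarrow> real"
    and x u :: "real \<Rightarrow> real vec"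
    and T \<alpha> :: real
    and t :: "nat \<Rightarrow> real"
  assumes Ac_dim: "Ac \<in> carrier_mat (nx n) (nx n)"
    and Bc_dim: "Bc \<in> carrier_mat (nx n) (nu n)"
    and L_pos: "\<forall>i. L i > 0"
    and x_dim: "\<forall>s\<ge>0. x s \<in> carrier_vec (nx n)"
    and u_dim: "\<forall>s\<ge>0. u s \<in> carrier_vec (nu n)"
    and x_cont: "\<forall>j<nx n. continuous_on {0..} (\<lambda>s. x s $ j)"
    and x_dyn: "\<forall>s\<ge>0. \<forall>j<nx n.
        ((\<lambda>r. x r $ j) has_real_derivative ((Ac *\<^sub>v x s + Bc *\<^sub>v u s) $ j)) (at s within {s..})"
    and T_pos: "T > 0"
    and u_held: "\<forall>j::nat. \<forall>s. real j * T \<le> s \<and> s < real (Suc j) * T \<longrightarrow> u s = u (real j * T)"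
    and u_hat0: "\<forall>s\<ge>0. u s $ 1 = u s $ 0"
    and t_mono: "strict_mono t"
    and t_0: "t 0 = 0"
    and S_sub_T: "\<forall>j::nat. \<exists>k. t k = real j * T"
    and alpha_pos: "\<alpha> > 0"
    and trig: "\<forall>k. phi n Ac Bc * vnorm (x (t k) @\<^sub>v u (t k)) \<noteq> 0 \<longrightarrow>
        t (Suc k) - t k \<le> ln (lognorm (Atil n Ac Bc) * \<alpha> / (phi n Ac Bc * vnorm (x (t k) @\<^sub>v u (t k))) + 1)
                           / lognorm (Atil n Ac Bc)"
  shows "\<forall>k. \<forall>i\<in>{2..n}. \<forall>s. t k \<le> s \<and> s < t (Suc k) \<longrightarrow>
           \<bar>dist_i n L i (x s) - dist_i n L i (x (t k))\<bar> \<le> \<alpha>"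
proof (intro allI ballI impI)
  fix k i s assume i: "i \<in> {2..n}" and s: "t k \<le> s \<and> s < t (Suc k)"
  have "0 \<le> t k" using strict_mono_less_eq[OF t_mono, of 0 k] t_0 by simp
  have held: "u r = u (t k)" if "t k \<le> r" "r < t (Suc k)" for r
    using held_input_constant_between_events[OF T_pos _ t_mono _ \<open>0 \<le> t k\<close> that] u_held S_sub_T
    by blast
  show "\<bar>dist_i n L i (x s) - dist_i n L i (x (t k))\<bar> \<le> \<alpha>"
  proof (rule distance_change_le_between_events[OF Ac_dim Bc_dim _ _ _ \<open>0 \<le> t k\<close> _ _ _ i alpha_pos])
    fix r j assume r: "t k \<le> r" "r < t (Suc k)" and "j < nx n"
    with \<open>0 \<le> t k\<close> x_dyn
    have "((\<lambda>r. x r $ j) has_real_derivative (Ac *\<^sub>v x r + Bc *\<^sub>v u r) $ j) (at r within {r..})"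
      by simp
    then show "((\<lambda>r. x r $ j) has_real_derivative (Ac *\<^sub>v x r + Bc *\<^sub>v u (t k)) $ j) (at r within {r..})"
      unfolding held[OF r] .
  qed (use x_dim x_cont u_dim trig s \<open>0 \<le> t k\<close> in auto)
qed

end
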